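(* For each $N\ge1$ (with $h=1/(N+1)$) let $Q_h=[q_{ij}(h)]_{1\le i,j\le N}\in\mathcal M_N(\mathbb{C})$ be tridiagonal ($q_{ij}(h)=0$ if $|i-j|>1$) and assume: (1) $\max_{1\le j\le N}\{|q_{j,j-1}(h)|,|q_{j,j+1}(h)|\}\to0$ as $h\to0$; (2) $\frac1h\max_{1\le j\le N}|q_{j,j-1}(h)+q_{jj}(h)+q_{j,j+1}(h)|\to0$ as $h\to0$. Let $Y_h=[y_j(h)]_{1\le j\le N}$ and $\Theta_h=[\theta_j(h)]_{1\le j\le N}$ be vectors in $\mathbb{C}^N$ for which there is a constant $C>0$, independent of $h$, with $\max\{\langle K_hY_h,Y_h\rangle,\langle K_h\Theta_h,\Theta_h\rangle\}\le C$. Then $\langle Q_hY_h,\Theta_h\rangle\to0$ as $h\to0$.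
   Context: $K_h=\frac1h\mathrm{tridiag}(-1,2,-1)\in\mathcal M_N(\mathbb{R})$; $\langle U,W\rangle=\sum_j u_j\overline{w_j}$. In conditions (1)-(2), the symbols $q_{1,0}(h)$ and $q_{N,N+1}(h)$, which are not entries of $Q_h$, denote given complex numbers (e.g. $0$). *)

theory Defs
  imports "HOL-Analysis.Analysis"
begin

text \<open>Vectors in C^N are functions nat => complex, used on indices 1..N;
  N x N matrices are functions nat => nat => complex, used on indices 1..N.
  The mesh size is h = 1/(N+1), so h -> 0 iff N -> infinity.\<close>

definition matvec :: "nat \<Rightarrow> (nat \<Rightarrow> nat \<Rightarrow> complex) \<Rightarrow> (nat \<Rightarrow> complex) \<Rightarrow> nat \<Rightarrow> complex" where
  "matvec N A U i = (\<Sum>k\<in>{1..N}. A i k * U k)"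

definition cinnerN :: "nat \<Rightarrow> (nat \<Rightarrow> complex) \<Rightarrow> (nat \<Rightarrow> complex) \<Rightarrow> complex" where
  "cinnerN N U W = (\<Sum>j\<in>{1..N}. U j * cnj (W j))"

text \<open>K_h = (1/h) tridiag(-1,2,-1) with h = 1/(N+1).\<close>
definition Kmat :: "nat \<Rightarrow> nat \<Rightarrow> nat \<Rightarrow> complex" where
  "Kmat N i j = of_nat (N + 1) *
     (if i = j then 2 else if i = j + 1 \<or> j = i + 1 then -1 else 0)"

end

theory Submission
  imports Defs
begin

(* Extend a vector by y_0 = y_(N+1) = 0. Summation by parts gives
   <K_h Y, Y> = (N+1) * sum_(i=0..N) |y_(i+1) - y_i|^2, so by Cauchy-Schwarz the total variation
   sum_(i=0..N) |y_(i+1) - y_i| is at most sqrt C, and hence so is every |y_j|; likewise for Theta.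
   Writing the j-th row of Q_h Y as
     s_j y_j + q_(j,j-1) (y_(j-1) - y_j) + q_(j,j+1) (y_(j+1) - y_j),   s_j the j-th row sum,
   the first term contributes at most N * max|s_j| * C and the other two at most
   max(|q_(j,j-1)|, |q_(j,j+1)|) * C each, which tends to 0 by (2) and (1). *)

definition zero_ext :: "nat \<Rightarrow> (nat \<Rightarrow> 'a::zero) \<Rightarrow> nat \<Rightarrow> 'a" where
  "zero_ext N Y k = (if 1 \<le> k \<and> k \<le> N then Y k else 0)"

lemma zero_ext_0 [simp]: "zero_ext N Y 0 = 0"
  and zero_ext_Suc_N [simp]: "zero_ext N Y (Suc N) = 0"
  and zero_ext_eq: "1 \<le> k \<Longrightarrow> k \<le> N \<Longrightarrow> zero_ext N Y k = Y k"
  by (simp_all add: zero_ext_def)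

definition tridiagonal :: "nat \<Rightarrow> (nat \<Rightarrow> nat \<Rightarrow> 'a::zero) \<Rightarrow> bool" where
  "tridiagonal N A \<longleftrightarrow> (\<forall>i\<in>{1..N}. \<forall>j\<in>{1..N}. j > i + 1 \<or> i > j + 1 \<longrightarrow> A i j = 0)"

lemma tridiagonalD:
  "tridiagonal N A \<Longrightarrow> 1 \<le> i \<Longrightarrow> i \<le> N \<Longrightarrow> 1 \<le> j \<Longrightarrow> j \<le> N \<Longrightarrow>
     j > i + 1 \<or> i > j + 1 \<Longrightarrow> A i j = 0"
  by (auto simp: tridiagonal_def)

lemma tridiagonal_Kmat: "tridiagonal N (Kmat N)"
  by (auto simp: tridiagonal_def Kmat_def)

lemma matvec_tridiagonal:
  assumes "tridiagonal N A" and i: "1 \<le> i" "i \<le> N"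
  shows "matvec N A Y i = A i (i - 1) * zero_ext N Y (i - 1) + A i i * zero_ext N Y i
                          + A i (i + 1) * zero_ext N Y (i + 1)"
proof -
  let ?f = "\<lambda>k. A i k * zero_ext N Y k"
  have "matvec N A Y i = sum ?f {1..N}"
    unfolding matvec_def by (intro sum.cong) (auto simp: zero_ext_eq)
  also have "\<dots> = sum ?f {0..N+1}"
    by (intro sum.mono_neutral_left) (auto simp: zero_ext_def)
  also have "\<dots> = sum ?f {i - 1, i, i + 1}"
    using i
    by (intro sum.mono_neutral_right) (auto simp: zero_ext_def intro!: tridiagonalD[OF assms(1)])
  also have "\<dots> = ?f (i - 1) + ?f i + ?f (i + 1)"
    using i by (cases i) (simp_all add: add.assoc)
  finally show ?thesis .
qed

lemma matvec_Kmat: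
  assumes "1 \<le> i" "i \<le> N"
  shows "matvec N (Kmat N) Y i
           = of_nat (N + 1) * (2 * zero_ext N Y i - zero_ext N Y (i - 1) - zero_ext N Y (i + 1))"
  using assms by (simp add: matvec_tridiagonal tridiagonal_Kmat) (simp add: Kmat_def algebra_simps)

lemma sum_second_difference_mult_cnj:
  fixes z :: "nat \<Rightarrow> complex"
  shows "(\<Sum>i=1..n. (2 * z i - z (i - 1) - z (i + 1)) * cnj (z i))
           = (\<Sum>i<n. (z (Suc i) - z i) * cnj (z (Suc i) - z i))
             + (z n - z (n + 1)) * cnj (z n) + (z 1 - z 0) * cnj (z 0)"
  by (induction n) (simp_all add: algebra_simps)

lemma cinnerN_Kmat:
  "cinnerN N (matvec N (Kmat N) Y) Y
     = of_real (real (N + 1) * (\<Sum>i\<le>N. (cmod (zero_ext N Y (Suc i) - zero_ext N Y i))\<^sup>2))"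
proof -
  let ?z = "zero_ext N Y"
  have "cinnerN N (matvec N (Kmat N) Y) Y
          = of_nat (N + 1) * (\<Sum>i=1..N. (2 * ?z i - ?z (i - 1) - ?z (i + 1)) * cnj (?z i))"
    unfolding cinnerN_def sum_distrib_left
    by (intro sum.cong) (auto simp: matvec_Kmat zero_ext_eq mult.assoc)
  also have "\<dots> = of_nat (N + 1) * (\<Sum>i\<le>N. (?z (Suc i) - ?z i) * cnj (?z (Suc i) - ?z i))"
    unfolding sum_second_difference_mult_cnj by (simp flip: lessThan_Suc_atMost)
  finally show ?thesis
    by (simp only: of_real_mult of_real_sum complex_norm_square of_real_of_nat_eq)
qed

lemma sum_norm_diff_zero_ext_le_sqrt:
  assumes "Re (cinnerN N (matvec N (Kmat N) Y) Y) \<le> C"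
  shows "(\<Sum>i\<le>N. cmod (zero_ext N Y (Suc i) - zero_ext N Y i)) \<le> sqrt C"
proof (rule real_le_rsqrt)
  let ?d = "\<lambda>i. cmod (zero_ext N Y (Suc i) - zero_ext N Y i)"
  have "(\<Sum>i\<le>N. ?d i)\<^sup>2 \<le> (\<Sum>i\<le>N. (?d i)\<^sup>2) * real (N + 1)"
    using sum_squared_le_sum_of_squares[of ?d "{..N}"] by simp
  also have "\<dots> = Re (cinnerN N (matvec N (Kmat N) Y) Y)"
    by (simp add: cinnerN_Kmat)
  finally show "(\<Sum>i\<le>N. ?d i)\<^sup>2 \<le> C"
    using assms by linarith
qed

lemma norm_le_sum_norm_diff:
  fixes z :: "nat \<Rightarrow> 'a::real_normed_vector"
  assumes "z 0 = 0" "j \<le> n"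
  shows "norm (z j) \<le> (\<Sum>i<n. norm (z (Suc i) - z i))"
proof -
  have "norm (z j) = norm (\<Sum>i<j. z (Suc i) - z i)"
    using assms(1) by (simp add: sum_lessThan_telescope)
  also have "\<dots> \<le> (\<Sum>i<j. norm (z (Suc i) - z i))"
    by (rule norm_sum)
  also have "\<dots> \<le> (\<Sum>i<n. norm (z (Suc i) - z i))"
    using assms(2) by (intro sum_mono2) auto
  finally show ?thesis .
qed

lemma sum_norm_backward_diff_le:
  fixes z :: "nat \<Rightarrow> 'a::real_normed_vector"
  shows "(\<Sum>j=1..n. norm (z (j - 1) - z j)) \<le> (\<Sum>i\<le>n. norm (z (Suc i) - z i))"
proof -
  have "(\<Sum>j=1..n. norm (z (j - 1) - z j)) = (\<Sum>i<n. norm (z (Suc i) - z i))"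
    by (simp add: sum.atLeast1_atMost_eq norm_minus_commute)
  also have "\<dots> \<le> (\<Sum>i\<le>n. norm (z (Suc i) - z i))"
    by (intro sum_mono2) auto
  finally show ?thesis .
qed

lemma sum_norm_forward_diff_le:
  fixes z :: "nat \<Rightarrow> 'a::real_normed_vector"
  shows "(\<Sum>j=1..n. norm (z (j + 1) - z j)) \<le> (\<Sum>i\<le>n. norm (z (Suc i) - z i))"
  unfolding Suc_eq_plus1[symmetric] by (intro sum_mono2) auto

lemma norm_zero_ext_le_sum_norm_diff:
  "cmod (zero_ext N Y j) \<le> (\<Sum>i\<le>N. cmod (zero_ext N Y (Suc i) - zero_ext N Y i))"
proof (cases "j \<le> N")
  case True
  then show ?thesis
    using norm_le_sum_norm_diff[of "zero_ext N Y" j "Suc N"] by (simp add: lessThan_Suc_atMost)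
qed (simp add: zero_ext_def sum_nonneg)

lemma norm_sum_mult3_le:
  fixes a b c :: "'i \<Rightarrow> 'a::real_normed_div_algebra"
  assumes "\<And>j. j \<in> S \<Longrightarrow> norm (a j) \<le> A" "\<And>j. j \<in> S \<Longrightarrow> norm (c j) \<le> B"
  shows "norm (\<Sum>j\<in>S. a j * b j * c j) \<le> A * B * (\<Sum>j\<in>S. norm (b j))"
proof -
  have "norm (\<Sum>j\<in>S. a j * b j * c j) \<le> (\<Sum>j\<in>S. norm (a j) * norm (b j) * norm (c j))"
    by (rule order_trans[OF norm_sum]) (simp add: norm_mult)
  also have "\<dots> \<le> (\<Sum>j\<in>S. A * norm (b j) * B)"
    using assms by (intro sum_mono mult_mono)
      (auto intro!: mult_nonneg_nonneg intro: order_trans[OF norm_ge_zero])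
  finally show ?thesis
    by (simp add: sum_distrib_left mult_ac)
qed

lemma cinnerN_tridiagonal_eq:
  fixes A :: "nat \<Rightarrow> nat \<Rightarrow> complex"
  assumes "tridiagonal N A"
  shows "cinnerN N (matvec N A Y) \<Theta>
           = (\<Sum>j=1..N. (A j (j - 1) + A j j + A j (j + 1)) * zero_ext N Y j * cnj (\<Theta> j))
             + (\<Sum>j=1..N. A j (j - 1) * (zero_ext N Y (j - 1) - zero_ext N Y j) * cnj (\<Theta> j))
             + (\<Sum>j=1..N. A j (j + 1) * (zero_ext N Y (j + 1) - zero_ext N Y j) * cnj (\<Theta> j))"
  unfolding cinnerN_def sum.distrib[symmetric]
proof (intro sum.cong refl)
  fix j assume "j \<in> {1..N}"
  then have "matvec N A Y j = A j (j - 1) * zero_ext N Y (j - 1) + A j j * zero_ext N Y j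
                              + A j (j + 1) * zero_ext N Y (j + 1)"
    using assms by (intro matvec_tridiagonal) auto
  then show "matvec N A Y j * cnj (\<Theta> j)
               = (A j (j - 1) + A j j + A j (j + 1)) * zero_ext N Y j * cnj (\<Theta> j)
                 + A j (j - 1) * (zero_ext N Y (j - 1) - zero_ext N Y j) * cnj (\<Theta> j)
                 + A j (j + 1) * (zero_ext N Y (j + 1) - zero_ext N Y j) * cnj (\<Theta> j)"
    by (simp add: algebra_simps)
qed

lemma norm_cinnerN_tridiagonal_le:
  fixes A :: "nat \<Rightarrow> nat \<Rightarrow> complex"
  assumes "tridiagonal N A"
    and off_diag: "\<And>j. 1 \<le> j \<Longrightarrow> j \<le> N \<Longrightarrow> max (norm (A j (j - 1))) (norm (A j (j + 1))) \<le> M1"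
    and row_sum: "\<And>j. 1 \<le> j \<Longrightarrow> j \<le> N \<Longrightarrow> norm (A j (j - 1) + A j j + A j (j + 1)) \<le> M2"
    and "1 \<le> N"
    and energy_Y: "Re (cinnerN N (matvec N (Kmat N) Y) Y) \<le> C"
    and energy_\<Theta>: "Re (cinnerN N (matvec N (Kmat N) \<Theta>) \<Theta>) \<le> C"
  shows "norm (cinnerN N (matvec N A Y) \<Theta>) \<le> C * (real N * M2 + 2 * M1)"
proof -
  let ?z = "zero_ext N Y" and ?K = "sqrt C"
  have var_Y: "(\<Sum>i\<le>N. cmod (?z (Suc i) - ?z i)) \<le> ?K"
    by (rule sum_norm_diff_zero_ext_le_sqrt[OF energy_Y])
  have z_le: "cmod (?z j) \<le> ?K" for j
    using norm_zero_ext_le_sum_norm_diff[of N Y j] var_Y by linarith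
  have \<Theta>_le: "cmod (cnj (\<Theta> j)) \<le> ?K" if "j \<in> {1..N}" for j
    using norm_zero_ext_le_sum_norm_diff[of N \<Theta> j] sum_norm_diff_zero_ext_le_sqrt[OF energy_\<Theta>]
      that
    by (simp add: zero_ext_eq)
  have "0 \<le> ?K"
    using z_le[of 0] by simp
  have "0 \<le> M1" "0 \<le> M2"
    using off_diag[of 1] row_sum[of 1] \<open>1 \<le> N\<close> by (auto intro: order_trans[OF norm_ge_zero])
  have sum_z: "(\<Sum>j=1..N. cmod (?z j)) \<le> real N * ?K"
    using sum_mono[of "{1..N}" "\<lambda>j. cmod (?z j)" "\<lambda>_. ?K"] z_le by simp
  have sum_left: "(\<Sum>j=1..N. cmod (?z (j - 1) - ?z j)) \<le> ?K"
    using sum_norm_backward_diff_le[of ?z N] var_Y by linarith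
  have sum_right: "(\<Sum>j=1..N. cmod (?z (j + 1) - ?z j)) \<le> ?K"
    using sum_norm_forward_diff_le[of ?z N] var_Y by linarith
  have "norm (cinnerN N (matvec N A Y) \<Theta>)
          \<le> M2 * ?K * (\<Sum>j=1..N. cmod (?z j))
            + M1 * ?K * (\<Sum>j=1..N. cmod (?z (j - 1) - ?z j))
            + M1 * ?K * (\<Sum>j=1..N. cmod (?z (j + 1) - ?z j))"
    unfolding cinnerN_tridiagonal_eq[OF \<open>tridiagonal N A\<close>]
  proof (intro norm_triangle_mono)
    show "norm (\<Sum>j=1..N. (A j (j - 1) + A j j + A j (j + 1)) * ?z j * cnj (\<Theta> j))
            \<le> M2 * ?K * (\<Sum>j=1..N. cmod (?z j))"
      using row_sum \<Theta>_le by (intro norm_sum_mult3_le) auto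
    show "norm (\<Sum>j=1..N. A j (j - 1) * (?z (j - 1) - ?z j) * cnj (\<Theta> j))
            \<le> M1 * ?K * (\<Sum>j=1..N. cmod (?z (j - 1) - ?z j))"
      using off_diag \<Theta>_le by (intro norm_sum_mult3_le) auto
    show "norm (\<Sum>j=1..N. A j (j + 1) * (?z (j + 1) - ?z j) * cnj (\<Theta> j))
            \<le> M1 * ?K * (\<Sum>j=1..N. cmod (?z (j + 1) - ?z j))"
      using off_diag \<Theta>_le by (intro norm_sum_mult3_le) auto
  qed
  also have "\<dots> \<le> M2 * ?K * (real N * ?K) + M1 * ?K * ?K + M1 * ?K * ?K"
    using \<open>0 \<le> M1\<close> \<open>0 \<le> M2\<close> \<open>0 \<le> ?K\<close>
    by (intro add_mono mult_left_mono sum_z sum_left sum_right mult_nonneg_nonneg)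
  also have "\<dots> = C * (real N * M2 + 2 * M1)"
    using \<open>0 \<le> ?K\<close> by (simp add: algebra_simps)
  finally show ?thesis .
qed

theorem lemma6:
  fixes q :: "nat \<Rightarrow> nat \<Rightarrow> nat \<Rightarrow> complex"
    and Y \<Theta> :: "nat \<Rightarrow> nat \<Rightarrow> complex"
    and C :: real
  assumes tridiag: "\<And>N i j. 1 \<le> i \<Longrightarrow> i \<le> N \<Longrightarrow> 1 \<le> j \<Longrightarrow> j \<le> N \<Longrightarrow>
                       (j > i + 1 \<or> i > j + 1) \<Longrightarrow> q N i j = 0"
    and cond1: "(\<lambda>N. Max ((\<lambda>j. max (norm (q N j (j - 1))) (norm (q N j (j + 1)))) ` {1..N}))
                  \<longlonglongrightarrow> 0"
    and cond2: "(\<lambda>N. real (N + 1) *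
                  Max ((\<lambda>j. norm (q N j (j - 1) + q N j j + q N j (j + 1))) ` {1..N}))
                  \<longlonglongrightarrow> 0"
    and Cpos: "C > 0"
    and bound: "\<And>N. N \<ge> 1 \<Longrightarrow>
        max (Re (cinnerN N (matvec N (Kmat N) (Y N)) (Y N)))
            (Re (cinnerN N (matvec N (Kmat N) (\<Theta> N)) (\<Theta> N))) \<le> C"
  shows "(\<lambda>N. cinnerN N (matvec N (q N) (Y N)) (\<Theta> N)) \<longlonglongrightarrow> 0"
proof (rule Lim_null_comparison)
  define M1 where "M1 N = Max ((\<lambda>j. max (norm (q N j (j - 1))) (norm (q N j (j + 1)))) ` {1..N})"
    for N
  define M2 where "M2 N = Max ((\<lambda>j. norm (q N j (j - 1) + q N j j + q N j (j + 1))) ` {1..N})"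
    for N
  have "norm (cinnerN N (matvec N (q N) (Y N)) (\<Theta> N)) \<le> C * (real (N + 1) * M2 N + 2 * M1 N)"
    if "1 \<le> N" for N
  proof -
    have off_diag: "max (norm (q N j (j - 1))) (norm (q N j (j + 1))) \<le> M1 N" if "j \<in> {1..N}" for j
      unfolding M1_def using that by (intro Max_ge) auto
    have row_sum: "norm (q N j (j - 1) + q N j j + q N j (j + 1)) \<le> M2 N" if "j \<in> {1..N}" for j
      unfolding M2_def using that by (intro Max_ge) auto
    have "norm (cinnerN N (matvec N (q N) (Y N)) (\<Theta> N)) \<le> C * (real N * M2 N + 2 * M1 N)"
      using bound[OF \<open>1 \<le> N\<close>] off_diag row_sum \<open>1 \<le> N\<close> tridiag
      by (intro norm_cinnerN_tridiagonal_le) (auto simp: tridiagonal_def)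
    also have "\<dots> \<le> C * (real (N + 1) * M2 N + 2 * M1 N)"
      using Cpos row_sum[of 1] \<open>1 \<le> N\<close>
      by (intro mult_left_mono add_right_mono mult_right_mono)
        (auto intro: order_trans[OF norm_ge_zero])
    finally show ?thesis .
  qed
  then show "\<forall>\<^sub>F N in sequentially.
               norm (cinnerN N (matvec N (q N) (Y N)) (\<Theta> N)) \<le> C * (real (N + 1) * M2 N + 2 * M1 N)"
    by (intro eventually_sequentiallyI)
  show "(\<lambda>N. C * (real (N + 1) * M2 N + 2 * M1 N)) \<longlonglongrightarrow> 0"
    unfolding M1_def M2_def by (intro tendsto_mult_right_zero tendsto_add_zero cond1 cond2)
qed

end
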